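(* Let $k\ge 2$, $n=2^k$, and run Jakobsson's pebble-update procedure. Then the pebbles with initial labels $1,\dots,k-1$ are each eventually discarded, and they are discarded in the reverse order of their initial labels: first the pebble with label $k-1$, then the one with label $k-2$, and so on, down to the pebble with label $1$.
   Context: Jakobsson's pebble-update procedure (hash-chain preimage traversal). Fix $k\ge 1$ and $n=2^k$. There are $k$ pebbles, identified by their initial label $j\in\{1,\dots,k\}$; the pebble with label $k$ sits at the seed of the hash chain. Pebble $j$ has two fixed constants $S_j=3\cdot 2^j$ (start increment) and $D_j=2^{j+1}$ (destination increment), and two integer fields $\mathrm{Position}$ and $\mathrm{Destination}$ (which may be set to $+\infty$). Initially $\mathrm{Position}=\mathrm{Destination}=2^j$ for pebble $j$, and a counter $c$ equals $0$. The pebbles are kept sorted by $\mathrm{Position}$, and "the first pebble" means the pebble with the smallest $\mathrm{Position}$. One step: (i) if $c=n$, stop; otherwise $c\leftarrow c+1$; (ii) for every pebble with $\mathrm{Position}\ne\mathrm{Destination}$, set $\mathrm{Position}\leftarrow\mathrm{Position}-2$; (iii) if $c$ is even, the first pebble (say with initial label $j$) makes a backward move: $\mathrm{Position}\leftarrow \mathrm{Position}+S_j$, $\mathrm{Destination}\leftarrow\mathrm{Destination}+D_j$; if the new Destination exceeds $n$, both fields are set to $+\infty$ and the pebble is said to be discarded; then the pebbles are re-sorted by $\mathrm{Position}$. (Each pebble also stores a hash-chain value, which does not influence the evolution of the Position and Destination fields.) *)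

theory Defs
  imports Main
begin

text \<open>Pebbles are identified by their initial
label j in {1..k}. Position/Destination are values in int extended by +infinity,
represented as int option with None = +infinity.\<close>

record pstate =
  cnt :: nat
  pos :: "nat \<Rightarrow> int option"
  dst :: "nat \<Rightarrow> int option"

definition S_inc :: "nat \<Rightarrow> int" where "S_inc j = 3 * 2 ^ j"
definition D_inc :: "nat \<Rightarrow> int" where "D_inc j = 2 ^ (j + 1)"

definition init_state :: "nat \<Rightarrow> pstate" where
  "init_state k = \<lparr> cnt = 0,
     pos = (\<lambda>j. Some (2 ^ j)),
     dst = (\<lambda>j. Some (2 ^ j)) \<rparr>"

text \<open>The first pebble: the label among 1..k with the smallest (finite) Position;
ties (which never occur) are broken by smallest label. If every Position is +infinity
there is no pebble with finite Position, and the backward move changes nothing.\<close>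
definition is_first :: "nat \<Rightarrow> pstate \<Rightarrow> nat \<Rightarrow> bool" where
  "is_first k s j \<longleftrightarrow> j \<in> {1..k} \<and> pos s j \<noteq> None \<and>
     (\<forall>i\<in>{1..k}. pos s i \<noteq> None \<longrightarrow> the (pos s j) \<le> the (pos s i))"

definition first_pebble :: "nat \<Rightarrow> pstate \<Rightarrow> nat" where
  "first_pebble k s = (LEAST j. is_first k s j)"

definition move_all :: "pstate \<Rightarrow> pstate" where
  "move_all s = s \<lparr> pos := (\<lambda>j. if pos s j \<noteq> dst s j
                                 then map_option (\<lambda>x. x - 2) (pos s j) else pos s j) \<rparr>"

definition backward :: "nat \<Rightarrow> nat \<Rightarrow> pstate \<Rightarrow> pstate" where
  "backward n j s =
     (let p' = map_option (\<lambda>x. x + S_inc j) (pos s j);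
          d' = map_option (\<lambda>x. x + D_inc j) (dst s j)
      in if (case d' of None \<Rightarrow> True | Some d \<Rightarrow> d > int n)
         then s \<lparr> pos := (pos s)(j := None), dst := (dst s)(j := None) \<rparr>
         else s \<lparr> pos := (pos s)(j := p'), dst := (dst s)(j := d') \<rparr>)"

definition step :: "nat \<Rightarrow> pstate \<Rightarrow> pstate" where
  "step k s =
     (if cnt s = 2 ^ k then s
      else let s1 = move_all (s \<lparr> cnt := Suc (cnt s) \<rparr>)
           in if even (cnt s1) \<and> (\<exists>j. is_first k s1 j)
              then backward (2 ^ k) (first_pebble k s1) s1
              else s1)"

definition run :: "nat \<Rightarrow> nat \<Rightarrow> pstate" where
  "run k t = (step k ^^ t) (init_state k)"

definition discarded_at :: "nat \<Rightarrow> nat \<Rightarrow> nat \<Rightarrow> bool" where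
  "discarded_at k j t \<longleftrightarrow> 1 \<le> t \<and> t \<le> 2 ^ k \<and>
     dst (run k (t - 1)) j \<noteq> None \<and> dst (run k t) j = None"

end

theory Submission
  imports Defs "HOL-Computational_Algebra.Primes"
begin

text \<open>The procedure has an exact closed form.  After \<open>c\<close> steps, pebble \<open>j\<close>
  has Destination \<open>next_dest j c\<close>, the least number above \<open>c\<close> congruent to \<open>2^j\<close>
  modulo \<open>2^(j+1)\<close>, and Position \<open>max N (3N - 3 \<cdot> 2^j - 2c)\<close> where \<open>N\<close> is that
  destination; the pebble is discarded as soon as this destination exceeds \<open>n = 2^k\<close>.
  At an even time \<open>c + 1\<close> the pebble reaching its destination is the one whose label
  \<open>j\<close> makes \<open>2^j\<close> the exact power of two dividing \<open>c + 1\<close>; it is the unique first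
  pebble and its backward move reproduces the closed form.  Hence pebble \<open>j < k\<close> is
  discarded at time \<open>2^k - 2^j\<close>, and these times decrease with \<open>j\<close>.\<close>

text \<open>This singles out the unique pebble
  that makes the backward move at a given even time.\<close>
lemma dvd_add_power_iff_multiplicity:
  fixes m :: nat
  assumes "m > 0"
  shows "2 ^ (j + 1) dvd m + 2 ^ j \<longleftrightarrow> j = multiplicity 2 m"
proof -
  have "2 ^ (j + 1) dvd m + 2 ^ j \<longleftrightarrow> 2 ^ j dvd m \<and> \<not> 2 ^ Suc j dvd m"
  proof
    assume d: "2 ^ (j + 1) dvd m + 2 ^ j"
    have "(2::nat) ^ j dvd 2 ^ (j + 1)" by (simp add: le_imp_power_dvd)
    then have "2 ^ j dvd m" using d by (meson dvd_add_left_iff dvd_refl dvd_trans)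
    moreover have "\<not> 2 ^ Suc j dvd m"
    proof
      assume "2 ^ Suc j dvd m"
      then have "2 ^ (j + 1) dvd (2::nat) ^ j" using d by (simp add: dvd_add_right_iff)
      then show False by (simp add: power_le_dvd)
    qed
    ultimately show "2 ^ j dvd m \<and> \<not> 2 ^ Suc j dvd m" ..
  next
    assume "2 ^ j dvd m \<and> \<not> 2 ^ Suc j dvd m"
    then obtain t where t: "m = 2 ^ j * t" and "odd t" by (auto elim!: dvdE)
    then obtain u where "t + 1 = 2 * u" by (metis evenE odd_even_add odd_one)
    then have "m + 2 ^ j = 2 ^ (j + 1) * u" using t by (metis add.commute mult.assoc
        mult.commute mult_Suc_right power_Suc Suc_eq_plus1)
    then show "2 ^ (j + 1) dvd m + 2 ^ j" by simp
  qed
  also have "\<dots> \<longleftrightarrow> j = multiplicity 2 m"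
    using power_dvd_iff_le_multiplicity[of m 2 j] power_dvd_iff_le_multiplicity[of m 2 "Suc j"] assms
    by auto
  finally show ?thesis .
qed

text \<open>Destination of pebble \<open>j\<close> after \<open>c\<close> steps: the least number above \<open>c\<close> that is
  congruent to \<open>2^j\<close> modulo \<open>2^(j+1)\<close>.  (It may exceed \<open>2^k\<close>; the pebble is then
  discarded.)\<close>
definition next_dest :: "nat \<Rightarrow> nat \<Rightarrow> nat" where
  "next_dest j c = c + 2 ^ (j + 1) - (c + 2 ^ j) mod 2 ^ (j + 1)"

lemma next_dest_gt: "c < next_dest j c"
proof -
  have "(c + 2 ^ j) mod 2 ^ (j + 1) < (2::nat) ^ (j + 1)" by simp
  then show ?thesis unfolding next_dest_def by linarith
qed

lemma next_dest_0: "next_dest j 0 = 2 ^ j"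
  by (simp add: next_dest_def)

lemma next_dest_congruent: "2 ^ (j + 1) dvd next_dest j c + 2 ^ j"
proof -
  define M :: nat where "M = 2 ^ (j + 1)"
  define r where "r = (c + 2 ^ j) mod M"
  have "r < M" by (simp add: r_def M_def)
  moreover have "c + 2 ^ j = (c + 2 ^ j) div M * M + r"
    by (simp add: r_def)
  ultimately have "next_dest j c + 2 ^ j = ((c + 2 ^ j) div M + 1) * M"
    unfolding next_dest_def M_def[symmetric] r_def[symmetric] by (simp add: algebra_simps)
  then show ?thesis by (simp add: M_def)
qed

lemma next_dest_even: "1 \<le> j \<Longrightarrow> even (next_dest j c)"
proof -
  assume "1 \<le> j"
  then have "2 dvd (2::nat) ^ j" and "2 dvd (2::nat) ^ (j + 1)" by (simp_all add: dvd_power)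
  then show "even (next_dest j c)"
    using next_dest_congruent[of j c] by (meson dvd_add_left_iff dvd_trans)
qed

lemma Suc_eq_next_dest_iff: "Suc c = next_dest j c \<longleftrightarrow> Suc ((c + 2 ^ j) mod 2 ^ (j + 1)) = 2 ^ (j + 1)"
proof -
  have "(c + 2 ^ j) mod 2 ^ (j + 1) < (2::nat) ^ (j + 1)" by simp
  then show ?thesis unfolding next_dest_def by linarith
qed

lemma next_dest_Suc:
  "next_dest j (Suc c) = (if Suc c = next_dest j c then next_dest j c + 2 ^ (j + 1) else next_dest j c)"
  using mod_Suc[of "c + 2 ^ j" "2 ^ (j + 1)"] Suc_eq_next_dest_iff[of c j]
  by (auto simp: next_dest_def)

lemma next_dest_hit_dvd:
  assumes "m > 0"
  shows "m = next_dest j (m - 1) \<longleftrightarrow> 2 ^ (j + 1) dvd m + 2 ^ j"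
  using Suc_eq_next_dest_iff[of "m - 1" j] mod_Suc[of "m - 1 + 2 ^ j" "2 ^ (j + 1)"] assms
  by (auto simp: dvd_eq_mod_eq_0)

lemma unique_arrival:
  assumes "even m" "0 < m" "m \<le> 2 ^ k"
  shows "multiplicity 2 m \<in> {1..k}"
    and "m = next_dest j (m - 1) \<longleftrightarrow> j = multiplicity 2 m"
proof -
  have "1 \<le> multiplicity 2 m"
    using assms power_dvd_iff_le_multiplicity[of m 2 1] by simp
  moreover have "2 ^ multiplicity 2 m \<le> m"
    using multiplicity_dvd[of 2 m] assms(2) by (simp add: dvd_imp_le)
  then have "(2::nat) ^ multiplicity 2 m \<le> 2 ^ k" using assms(3) by linarith
  then have "multiplicity 2 m \<le> k" by simp
  ultimately show "multiplicity 2 m \<in> {1..k}" by simp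
  show "m = next_dest j (m - 1) \<longleftrightarrow> j = multiplicity 2 m"
    using next_dest_hit_dvd[OF assms(2)] dvd_add_power_iff_multiplicity[OF assms(2)] by simp
qed

text \<open>Position at time \<open>c\<close> of pebble \<open>j\<close> heading for destination \<open>N\<close>: after its last
  jump it sat at \<open>N + 2^j\<close> at time \<open>N - 2^(j+1)\<close> and has walked left by 2 per step
  since, until it reaches \<open>N\<close> and waits there.\<close>
definition approach :: "nat \<Rightarrow> nat \<Rightarrow> nat \<Rightarrow> int" where
  "approach N j c = max (int N) (3 * int N - 3 * 2 ^ j - 2 * int c)"

lemma max_walk:
  fixes N x :: int
  assumes "even (x - N)"
  shows "(if max N x \<noteq> N then max N x - 2 else max N x) = max N (x - 2)"
proof (cases "x > N")
  case True
  with assms have "x \<ge> N + 2" by presburger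
  then show ?thesis by simp
qed simp

lemma approach_Suc:
  assumes "1 \<le> j" "even N"
  shows "(if approach N j c \<noteq> int N then approach N j c - 2 else approach N j c)
         = approach N j (Suc c)"
proof -
  have "even ((3 * int N - 3 * 2 ^ j - 2 * int c) - int N)"
    using assms by (simp add: even_diff)
  moreover have "3 * int N - 3 * 2 ^ j - 2 * int (Suc c) = 3 * int N - 3 * 2 ^ j - 2 * int c - 2"
    by simp
  ultimately show ?thesis
    unfolding approach_def by (simp only: max_walk)
qed

lemma approach_at_dest: "approach m j m = int m"
  by (simp add: approach_def)

lemma approach_after_jump: "approach (m + 2 ^ (j + 1)) j m = int m + S_inc j"
  by (simp add: approach_def S_inc_def)

text \<open>Predicted Position/Destination of pebble \<open>j\<close> at time \<open>c\<close> when its destination is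
  \<open>N\<close>; a destination beyond \<open>2^k\<close> means that the pebble has been discarded.\<close>
definition expected :: "nat \<Rightarrow> nat \<Rightarrow> nat \<Rightarrow> nat \<Rightarrow> int option \<times> int option" where
  "expected k j N c =
     (if N \<le> 2 ^ k then (Some (approach N j c), Some (int N)) else (None, None))"

definition simulates :: "nat \<Rightarrow> nat \<Rightarrow> pstate \<Rightarrow> bool" where
  "simulates k c s \<longleftrightarrow> cnt s = c \<and> (\<forall>j\<in>{1..k}. (pos s j, dst s j) = expected k j (next_dest j c) c)"

lemma simulates_init: "simulates k 0 (init_state k)"
  by (simp add: simulates_def expected_def approach_def init_state_def next_dest_0)

lemma move_all_expected:
  assumes "simulates k c s" "j \<in> {1..k}"
  shows "(pos (move_all (s\<lparr>cnt := Suc c\<rparr>)) j, dst (move_all (s\<lparr>cnt := Suc c\<rparr>)) j)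
         = expected k j (next_dest j c) (Suc c)"
proof -
  have "(pos s j, dst s j) = expected k j (next_dest j c) c"
    using assms by (simp add: simulates_def)
  moreover have "1 \<le> j" using assms(2) by simp
  ultimately show ?thesis
    using approach_Suc[of j "next_dest j c" c] next_dest_even[of j c]
    by (auto simp: move_all_def expected_def)
qed

lemma first_pebble_eqI:
  assumes j0: "j0 \<in> {1..k}" "pos s j0 = Some p"
    and least: "\<And>i q. i \<in> {1..k} \<Longrightarrow> i \<noteq> j0 \<Longrightarrow> pos s i = Some q \<Longrightarrow> p < q"
  shows "is_first k s j0" and "first_pebble k s = j0"
proof -
  have first_iff: "is_first k s i \<longleftrightarrow> i = j0" for i
  proof
    assume "is_first k s i"
    then obtain q where "i \<in> {1..k}" "pos s i = Some q" "q \<le> p"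
      using j0 by (auto simp: is_first_def)
    then show "i = j0" using least by force
  next
    assume "i = j0"
    then show "is_first k s i"
      using j0 least by (fastforce simp: is_first_def less_imp_le)
  qed
  then show "is_first k s j0" by simp
  show "first_pebble k s = j0"
    unfolding first_pebble_def first_iff by (rule Least_equality) simp_all
qed

lemma backward_pebble:
  assumes "pos s j = Some p" "dst s j = Some d"
  shows "(pos (backward n j s) i, dst (backward n j s) i) =
    (if i \<noteq> j then (pos s i, dst s i)
     else if d + D_inc j > int n then (None, None)
     else (Some (p + S_inc j), Some (d + D_inc j)))"
  using assms by (simp add: backward_def Let_def)

lemma step_unfold:
  assumes "cnt s = c" "c < 2 ^ k"
  defines "s1 \<equiv> move_all (s\<lparr>cnt := Suc c\<rparr>)"
  shows "step k s = (if even (Suc c) \<and> (\<exists>j. is_first k s1 j)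
                     then backward (2 ^ k) (first_pebble k s1) s1 else s1)"
proof -
  have "cnt s1 = Suc c" by (simp add: s1_def move_all_def)
  then show ?thesis using assms(1,2) by (simp add: step_def Let_def flip: s1_def)
qed

text \<open>At odd times nobody reaches its (even) destination and there is no backward move.\<close>
lemma step_odd:
  assumes sim: "simulates k c s" and "c < 2 ^ k" "odd (Suc c)"
  shows "simulates k (Suc c) (step k s)"
proof -
  define s1 where "s1 = move_all (s\<lparr>cnt := Suc c\<rparr>)"
  have "cnt s = c" using sim by (simp add: simulates_def)
  with assms have "step k s = s1"
    unfolding s1_def by (simp add: step_unfold)
  moreover have "next_dest j (Suc c) = next_dest j c" if "j \<in> {1..k}" for j
  proof -
    have "Suc c \<noteq> next_dest j c"
      using next_dest_even[of j c] that \<open>odd (Suc c)\<close> by (metis atLeastAtMost_iff)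
    then show ?thesis by (simp add: next_dest_Suc)
  qed
  ultimately show ?thesis
    using move_all_expected[OF sim]
    by (simp add: simulates_def s1_def move_all_def)
qed

text \<open>At an even time \<open>c + 1\<close> exactly the pebble \<open>j0\<close>, with \<open>2^j0\<close> the exact power of two
  dividing \<open>c + 1\<close>, reaches its destination; it is then strictly first and makes the
  backward move, which matches the new prediction (including the discard case).\<close>
lemma step_even:
  assumes sim: "simulates k c s" and bound: "c < 2 ^ k" and ev: "even (Suc c)"
  shows "simulates k (Suc c) (step k s)"
proof -
  define s1 where "s1 = move_all (s\<lparr>cnt := Suc c\<rparr>)"
  define j0 where "j0 = multiplicity 2 (Suc c)"
  have moved: "(pos s1 j, dst s1 j) = expected k j (next_dest j c) (Suc c)" if "j \<in> {1..k}" for j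
    using move_all_expected[OF sim that] by (simp add: s1_def)
  have hit: "Suc c = next_dest j c \<longleftrightarrow> j = j0" for j
    using unique_arrival(2)[of "Suc c" k j] ev bound by (simp add: j0_def)
  have j0: "j0 \<in> {1..k}"
    using unique_arrival(1)[of "Suc c" k] ev bound by (simp add: j0_def)
  have p0: "pos s1 j0 = Some (int (Suc c))" and d0: "dst s1 j0 = Some (int (Suc c))"
    using moved[OF j0] hit[of j0] bound approach_at_dest[of "Suc c" j0]
    by (simp_all add: expected_def)
  have later: "int (Suc c) < q" if "i \<in> {1..k}" "i \<noteq> j0" "pos s1 i = Some q" for i q
  proof -
    have "Suc c < next_dest i c"
      using next_dest_gt[of c i] hit[of i] that(2) by linarith
    then show ?thesis
      using moved[OF that(1)] that(3) by (auto simp: expected_def approach_def split: if_splits)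
  qed
  have "cnt s = c" using sim by (simp add: simulates_def)
  then have "step k s = (if even (Suc c) \<and> (\<exists>j. is_first k s1 j)
                         then backward (2 ^ k) (first_pebble k s1) s1 else s1)"
    using bound unfolding s1_def by (rule step_unfold)
  moreover have "is_first k s1 j0" and "first_pebble k s1 = j0"
    using first_pebble_eqI[OF j0 p0 later] by simp_all
  ultimately have jump: "step k s = backward (2 ^ k) j0 s1"
    using ev by auto
  show ?thesis
    unfolding simulates_def
  proof (intro conjI ballI)
    show "cnt (step k s) = Suc c"
      by (simp add: jump backward_def Let_def s1_def move_all_def)
  next
    fix j assume j: "j \<in> {1..k}"
    show "(pos (step k s) j, dst (step k s) j) = expected k j (next_dest j (Suc c)) (Suc c)"
    proof (cases "j = j0")
      case True
      have jumped: "next_dest j0 (Suc c) = Suc c + 2 ^ (j0 + 1)"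
        using next_dest_Suc[of j0 c] hit[of j0] by simp
      then have cast: "int (Suc c) + D_inc j0 = int (next_dest j0 (Suc c))"
        by (simp add: D_inc_def)
      show ?thesis
        using backward_pebble[OF p0 d0, of "2 ^ k" j0] approach_after_jump[of "Suc c" j0]
        unfolding True jump cast of_nat_less_iff
        by (simp add: expected_def jumped not_less)
    next
      case False
      then show ?thesis
        using backward_pebble[OF p0 d0, of "2 ^ k" j] moved[OF j] next_dest_Suc[of j c] hit[of j]
        by (simp add: jump)
    qed
  qed
qed

lemma simulates_step:
  "simulates k c s \<Longrightarrow> c < 2 ^ k \<Longrightarrow> simulates k (Suc c) (step k s)"
  using step_odd step_even by blast

lemma simulates_run: "c \<le> 2 ^ k \<Longrightarrow> simulates k c (run k c)"
proof (induction c)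
  case 0
  then show ?case by (simp add: run_def simulates_init)
next
  case (Suc c)
  then show ?case using simulates_step[of k c "run k c"] by (simp add: run_def)
qed

lemma discarded_iff:
  assumes "j \<in> {1..k}" "1 \<le> t" "t \<le> 2 ^ k"
  shows "discarded_at k j t \<longleftrightarrow> next_dest j (t - 1) \<le> 2 ^ k \<and> 2 ^ k < next_dest j t"
proof -
  have "(dst (run k c) j = None) \<longleftrightarrow> 2 ^ k < next_dest j c" if "c \<le> 2 ^ k" for c
  proof -
    have "(pos (run k c) j, dst (run k c) j) = expected k j (next_dest j c) c"
      using simulates_run[OF that] assms(1) by (simp add: simulates_def)
    then show ?thesis by (auto simp: expected_def split: if_splits)
  qed
  then show ?thesis
    using assms by (simp add: discarded_at_def not_less)
qed

text \<open>Pebble \<open>j < k\<close> is discarded at time \<open>2^k - 2^j\<close>, when it reaches the destination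
  \<open>2^k - 2^j\<close> and would jump to \<open>2^k + 2^j\<close>.\<close>
lemma discard_time:
  assumes "1 \<le> j" "j < k"
  shows "discarded_at k j (2 ^ k - 2 ^ j)"
proof -
  define t :: nat where "t = 2 ^ k - 2 ^ j"
  have "(2::nat) ^ j < 2 ^ k" using assms by simp
  then have t: "1 \<le> t" "t \<le> 2 ^ k" "t + 2 ^ j = 2 ^ k"
    unfolding t_def by linarith+
  have "2 ^ (j + 1) dvd (2::nat) ^ k" using assms by (intro le_imp_power_dvd) simp
  then have hit: "t = next_dest j (t - 1)"
    using next_dest_hit_dvd[of t j] t by simp
  then have "next_dest j t = t + 2 * 2 ^ j"
    using next_dest_Suc[of j "t - 1"] t(1) by simp
  moreover have "(0::nat) < 2 ^ j" by simp
  ultimately have "2 ^ k < next_dest j t" using t(3) by linarith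
  moreover have "next_dest j (t - 1) \<le> 2 ^ k" using hit t(2) by simp
  ultimately show ?thesis
    using discarded_iff[of j k t] assms t(1,2) by (simp add: t_def)
qed

theorem fact12:
  fixes k :: nat
  assumes "k \<ge> 2"
  shows "\<exists>T :: nat \<Rightarrow> nat.
           (\<forall>j\<in>{1..k-1}. discarded_at k j (T j)) \<and>
           (\<forall>i j. 1 \<le> i \<and> i < j \<and> j \<le> k - 1 \<longrightarrow> T j < T i)"
proof (intro exI[of _ "\<lambda>j. 2 ^ k - 2 ^ j"] conjI allI ballI impI)
  fix j assume "j \<in> {1..k-1}"
  then show "discarded_at k j (2 ^ k - 2 ^ j)" using discard_time assms by auto
next
  fix i j :: nat assume ij: "1 \<le> i \<and> i < j \<and> j \<le> k - 1"
  then have "j < k" using assms by linarith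
  then have "(2::nat) ^ i < 2 ^ j" and "(2::nat) ^ j < 2 ^ k" using ij by simp_all
  then show "(2::nat) ^ k - 2 ^ j < 2 ^ k - 2 ^ i" by linarith
qed

end
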